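(* Assume that $z_1,z_2\in D$ are in the same chart and that $f(z_1),f(z_2)$ are in the same chart. If $f$ satisfies the rate conditions of order $0$ and $z_1\in J_{cs}(z_2,L)$, then $\|\pi_{(\lambda,y)}(f(z_1)-f(z_2))\|\le\mu_{cs,1}\|\pi_{(\lambda,y)}(z_1-z_2)\|$.
   Context: $c,u,s$ positive integers, $\Lambda=(\mathbb{R}/\mathbb{Z})^c$, $R_\Lambda=\tfrac12$; points are "in the same chart" if their $\lambda$-components have lifts to $\mathbb{R}^c$ at distance $\le R_\Lambda$; differences, norms, cones and derivatives are computed in such lifts. $\overline B_n(R)$ closed ball at $0$; Euclidean norms. $0<R<R_\Lambda/2$, $D=\Lambda\times\overline B_u(R)\times\overline B_s(R)$, $z=(\lambda,x,y)$, projections $\pi_\lambda,\pi_x,\pi_y,\pi_{(\lambda,y)}$; $f:D\to\Lambda\times\mathbb{R}^u\times\mathbb{R}^s$ is $C^1$, $f=(f_\lambda,f_x,f_y)$. $m(A)=\max\{c:\|Av\|\ge c\|v\|\}$, $m(\mathbf A)=\inf_{A\in\mathbf A}m(A)$; $[\partial g/\partial w(U)]$ = set of matrices with $(i,j)$ entry in $[\inf_U\partial g_i/\partial w_j,\sup_U\partial g_i/\partial w_j]$; $P(z)=\{w\in D:\|\pi_\lambda w-\pi_\lambda z\|\le R_\Lambda/2\}$. Fix $L\in(2R/R_\Lambda,1)$. $\mu_{s,1}=\sup_D\{\|\partial_yf_y\|+\frac1L\|\partial_{(\lambda,x)}f_y\|\}$, $\xi_{u,1,P}=\inf_{z\in D}m[\partial_xf_x(P(z))]-\frac1L\sup_D\|\partial_{(\lambda,y)}f_x\|$,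 $\mu_{cs,1}=\sup_D\{\|\partial_{(\lambda,y)}f_{(\lambda,y)}\|+L\|\partial_xf_{(\lambda,y)}\|\}$, $\xi_{cu,1,P}=\inf_{z\in D}m[\partial_{(\lambda,x)}f_{(\lambda,x)}(P(z))]-L\sup_D\|\partial_yf_{(\lambda,x)}\|$. Rate conditions of order $0$: $\mu_{s,1}<1<\xi_{u,1,P}$, $\mu_{cs,1}<\xi_{u,1,P}$, $\mu_{s,1}<\xi_{cu,1,P}$. $J_{cs}(z,M)=\{(\lambda,x,y):\|x-\pi_xz\|<M\|(\lambda,y)-\pi_{(\lambda,y)}z\|\}\cup\{z\}$. *)

theory Defs
  imports "HOL-Analysis.Analysis"
begin

text \<open>Points of the lifted domain are triples (lambda, x, y) in
  real^'c * real^'u * real^'s; lambda is a lift to R^c of a point of the torus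
  (R/Z)^c.  The map f is represented by a lift F which is Z^c-equivariant
  in lambda (see the theorem).\<close>

definition R_Lam :: real where "R_Lam = 1/2"

definition Zc :: "(real^'c) set" where "Zc = {k. \<forall>i. k $ i \<in> \<int>}"

type_synonym ('c,'u,'s) pt = "(real^('c::finite)) \<times> (real^('u::finite)) \<times> (real^('s::finite))"

definition pl :: "('c::finite,'u::finite,'s::finite) pt \<Rightarrow> real^'c" where "pl z = fst z"
definition px :: "('c::finite,'u::finite,'s::finite) pt \<Rightarrow> real^'u" where "px z = fst (snd z)"
definition py :: "('c::finite,'u::finite,'s::finite) pt \<Rightarrow> real^'s" where "py z = snd (snd z)"
definition ply :: "('c::finite,'u::finite,'s::finite) pt \<Rightarrow> (real^'c) \<times> (real^'s)" where "ply z = (pl z, py z)"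
definition plx :: "('c::finite,'u::finite,'s::finite) pt \<Rightarrow> (real^'c) \<times> (real^'u)" where "plx z = (pl z, px z)"

definition Dl :: "real \<Rightarrow> ('c::finite,'u::finite,'s::finite) pt set" where
  "Dl R = {z. norm (px z) \<le> R \<and> norm (py z) \<le> R}"

definition blk_y_y :: "(('c::finite,'u::finite,'s::finite) pt \<Rightarrow> ('c,'u,'s) pt) \<Rightarrow> real^'s \<Rightarrow> real^'s" where
  "blk_y_y A v = py (A (0, 0, v))"
definition blk_lx_y :: "(('c::finite,'u::finite,'s::finite) pt \<Rightarrow> ('c,'u,'s) pt) \<Rightarrow> (real^'c) \<times> (real^'u) \<Rightarrow> real^'s" where
  "blk_lx_y A w = py (A (fst w, snd w, 0))"
definition blk_x_x :: "(('c::finite,'u::finite,'s::finite) pt \<Rightarrow> ('c,'u,'s) pt) \<Rightarrow> real^'u \<Rightarrow> real^'u" where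
  "blk_x_x A v = px (A (0, v, 0))"
definition blk_ly_x :: "(('c::finite,'u::finite,'s::finite) pt \<Rightarrow> ('c,'u,'s) pt) \<Rightarrow> (real^'c) \<times> (real^'s) \<Rightarrow> real^'u" where
  "blk_ly_x A w = px (A (fst w, 0, snd w))"
definition blk_ly_ly :: "(('c::finite,'u::finite,'s::finite) pt \<Rightarrow> ('c,'u,'s) pt) \<Rightarrow> (real^'c) \<times> (real^'s) \<Rightarrow> (real^'c) \<times> (real^'s)" where
  "blk_ly_ly A w = ply (A (fst w, 0, snd w))"
definition blk_x_ly :: "(('c::finite,'u::finite,'s::finite) pt \<Rightarrow> ('c,'u,'s) pt) \<Rightarrow> real^'u \<Rightarrow> (real^'c) \<times> (real^'s)" where
  "blk_x_ly A v = ply (A (0, v, 0))"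
definition blk_lx_lx :: "(('c::finite,'u::finite,'s::finite) pt \<Rightarrow> ('c,'u,'s) pt) \<Rightarrow> (real^'c) \<times> (real^'u) \<Rightarrow> (real^'c) \<times> (real^'u)" where
  "blk_lx_lx A w = plx (A (fst w, snd w, 0))"
definition blk_y_lx :: "(('c::finite,'u::finite,'s::finite) pt \<Rightarrow> ('c,'u,'s) pt) \<Rightarrow> real^'s \<Rightarrow> (real^'c) \<times> (real^'u)" where
  "blk_y_lx A v = plx (A (0, 0, v))"

definition mlow :: "('a::real_normed_vector \<Rightarrow> 'b::real_normed_vector) \<Rightarrow> real" where
  "mlow A = Sup {c. \<forall>v. c * norm v \<le> norm (A v)}"
definition mset :: "('a::real_normed_vector \<Rightarrow> 'b::real_normed_vector) set \<Rightarrow> real" where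
  "mset S = (INF A\<in>S. mlow A)"

definition ihull :: "('p \<Rightarrow> ('a::euclidean_space \<Rightarrow> 'b::euclidean_space)) \<Rightarrow> 'p set \<Rightarrow> ('a \<Rightarrow> 'b) set" where
  "ihull M U = {A. linear A \<and> (\<forall>j\<in>Basis. \<forall>i\<in>Basis.
      (INF w\<in>U. M w j \<bullet> i) \<le> A j \<bullet> i \<and> A j \<bullet> i \<le> (SUP w\<in>U. M w j \<bullet> i))}"

definition Pset :: "real \<Rightarrow> ('c::finite,'u::finite,'s::finite) pt \<Rightarrow> ('c,'u,'s) pt set" where
  "Pset R z = {w \<in> Dl R. \<exists>k\<in>Zc. norm (pl w - pl z - k) \<le> R_Lam / 2}"

definition mu_s1 :: "real \<Rightarrow> real \<Rightarrow> (('c::finite,'u::finite,'s::finite) pt \<Rightarrow> ('c,'u,'s) pt \<Rightarrow> ('c,'u,'s) pt) \<Rightarrow> real" where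
  "mu_s1 R L DF = (SUP z\<in>Dl R. onorm (blk_y_y (DF z)) + 1/L * onorm (blk_lx_y (DF z)))"

definition xi_u1P :: "real \<Rightarrow> real \<Rightarrow> (('c::finite,'u::finite,'s::finite) pt \<Rightarrow> ('c,'u,'s) pt \<Rightarrow> ('c,'u,'s) pt) \<Rightarrow> real" where
  "xi_u1P R L DF = (INF z\<in>Dl R. mset (ihull (\<lambda>w. blk_x_x (DF w)) (Pset R z)))
      - 1/L * (SUP z\<in>Dl R. onorm (blk_ly_x (DF z)))"

definition mu_cs1 :: "real \<Rightarrow> real \<Rightarrow> (('c::finite,'u::finite,'s::finite) pt \<Rightarrow> ('c,'u,'s) pt \<Rightarrow> ('c,'u,'s) pt) \<Rightarrow> real" where
  "mu_cs1 R L DF = (SUP z\<in>Dl R. onorm (blk_ly_ly (DF z)) + L * onorm (blk_x_ly (DF z)))"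

definition xi_cu1P :: "real \<Rightarrow> real \<Rightarrow> (('c::finite,'u::finite,'s::finite) pt \<Rightarrow> ('c,'u,'s) pt \<Rightarrow> ('c,'u,'s) pt) \<Rightarrow> real" where
  "xi_cu1P R L DF = (INF z\<in>Dl R. mset (ihull (\<lambda>w. blk_lx_lx (DF w)) (Pset R z)))
      - L * (SUP z\<in>Dl R. onorm (blk_y_lx (DF z)))"

definition rate_conditions_0 :: "real \<Rightarrow> real \<Rightarrow> (('c::finite,'u::finite,'s::finite) pt \<Rightarrow> ('c,'u,'s) pt \<Rightarrow> ('c,'u,'s) pt) \<Rightarrow> bool" where
  "rate_conditions_0 R L DF \<longleftrightarrow>
     mu_s1 R L DF < 1 \<and> 1 < xi_u1P R L DF \<and> mu_cs1 R L DF < xi_u1P R L DF \<and>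
     mu_s1 R L DF < xi_cu1P R L DF"

definition J_cs :: "('c::finite,'u::finite,'s::finite) pt \<Rightarrow> real \<Rightarrow> ('c,'u,'s) pt set" where
  "J_cs z M = {w. norm (px w - px z) < M * norm (ply w - ply z)} \<union> {z}"

end

theory Submission
  imports Defs
begin

text \<open>The lifted domain is convex, so the mean value theorem along the segment from z2 to z1
  bounds the (lambda,y)-difference of the images by the derivative applied to z1 - z2.  Splitting
  that derivative into its (lambda,y)- and x-blocks, the cone condition z1 \<in> J_cs z2 L bounds the
  x-contribution by L times the (lambda,y)-length, which yields the integrand of mu_cs1.  The
  supremum defining mu_cs1 is a genuine bound because DF is Z^c-periodic in lambda, hence bounded
  by compactness of a fundamental domain.  Finally, subtracting the integer vector k, which lies
  within 1/2 of the lambda-difference, can only decrease its norm.\<close>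

lemma Dl_eq: "Dl R = UNIV \<times> cball 0 R \<times> cball 0 R"
  by (auto simp: Dl_def px_def py_def)

lemma convex_Dl: "convex (Dl R)"
  unfolding Dl_eq by (intro convex_Times convex_UNIV convex_cball)

lemma Zc_norm_less_1_imp_zero:
  fixes k :: "real^'c::finite"
  assumes "k \<in> Zc" "norm k < 1"
  shows "k = 0"
proof (rule vec_eq_iff[THEN iffD2], intro allI)
  fix i
  have "\<bar>k $ i\<bar> < 1" using component_le_norm_cart[of k i] assms(2) by linarith
  then show "k $ i = 0 $ i"
    using assms(1) Ints_nonzero_abs_less1 by (auto simp: Zc_def)
qed

lemma norm_Pair_diff_Zc_le:
  fixes p :: "(real^'c::finite) \<times> 'b::real_normed_vector"
  assumes "k \<in> Zc" "norm (fst p - k) \<le> 1/2"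
  shows "norm (p - (k, 0)) \<le> norm p"
proof -
  have "norm (fst p - k) \<le> norm (fst p)"
  proof (rule ccontr)
    assume far: "\<not> norm (fst p - k) \<le> norm (fst p)"
    have "norm k \<le> norm (fst p - k) + norm (fst p)"
      using norm_triangle_ineq4[of "fst p" "fst p - k"] by (simp add: norm_minus_commute)
    then have "k = 0" using assms far by (intro Zc_norm_less_1_imp_zero) auto
    with far show False by simp
  qed
  then show ?thesis by (cases p) (simp add: norm_Pair power_mono)
qed

lemma continuous_Zc_valued_const:
  fixes G :: "'a::topological_space \<Rightarrow> real^'c::finite"
  assumes "connected S" "continuous_on S G" "G ` S \<subseteq> Zc" "x \<in> S" "y \<in> S"
  shows "G x = G y"
proof (rule vec_eq_iff[THEN iffD2], intro allI)
  fix i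
  have ints: "G w $ i \<in> \<int>" if "w \<in> S" for w
    using assms(3) that by (auto simp: Zc_def)
  have "(\<lambda>w. G w $ i) constant_on S"
  proof (rule continuous_discrete_range_constant[OF assms(1)])
    show "continuous_on S (\<lambda>w. G w $ i)"
      using assms(2) by (intro continuous_intros)
    fix w assume "w \<in> S"
    then have "1 \<le> norm (G v $ i - G w $ i)" if "v \<in> S \<and> G v $ i \<noteq> G w $ i" for v
      using that ints Ints_nonzero_abs_ge1[of "G v $ i - G w $ i"] by auto
    then show "\<exists>e>0. \<forall>v. v \<in> S \<and> G v $ i \<noteq> G w $ i \<longrightarrow> e \<le> norm (G v $ i - G w $ i)"
      by (intro exI[of _ 1]) auto
  qed
  then show "G x $ i = G y $ i"
    using assms(4,5) unfolding constant_on_def by metis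
qed

text \<open>The integer increment is a priori point-dependent; connectedness of Dl R makes it constant.\<close>

lemma lift_increment_const:
  fixes F :: "('c::finite,'u::finite,'s::finite) pt \<Rightarrow> ('c,'u,'s) pt"
  assumes R: "0 \<le> R" and contF: "continuous_on (Dl R) F"
    and eqv: "\<forall>z\<in>Dl R. \<forall>j\<in>Zc. \<exists>j'\<in>Zc. F (pl z + j, px z, py z) = F z + (j', 0, 0)"
    and j: "j \<in> Zc"
  obtains c where "\<And>w. w \<in> Dl R \<Longrightarrow> F (w + (j, 0, 0)) = F w + (c, 0, 0)"
proof -
  have shift: "(pl w + j, px w, py w) = w + (j, 0, 0)" for w :: "('c,'u,'s) pt"
    by (cases w) (simp add: pl_def px_def py_def)
  have shift_Dl: "w + (j, 0, 0) \<in> Dl R" if "w \<in> Dl R" for w :: "('c,'u,'s) pt"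
    using that by (simp add: Dl_def px_def py_def)
  define G where "G w = pl (F (w + (j, 0, 0)) - F w)" for w
  have incr: "F (w + (j, 0, 0)) = F w + (G w, 0, 0)" "G w \<in> Zc" if w: "w \<in> Dl R" for w
  proof -
    obtain j' where "j' \<in> Zc" "F (w + (j, 0, 0)) = F w + (j', 0, 0)"
      using eqv[rule_format, OF w j] unfolding shift by blast
    moreover from this have "G w = j'" by (simp add: G_def pl_def)
    ultimately show "F (w + (j, 0, 0)) = F w + (G w, 0, 0)" "G w \<in> Zc" by simp_all
  qed
  have "continuous_on (Dl R) (\<lambda>w. F (w + (j, 0, 0)))"
    using shift_Dl by (intro continuous_on_compose2[OF contF] continuous_intros) auto
  then have "continuous_on (Dl R) G"
    unfolding G_def pl_def by (intro continuous_intros contF)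
  moreover have "0 \<in> Dl R" using R by (simp add: Dl_eq zero_prod_def)
  ultimately have "G w = G 0" if "w \<in> Dl R" for w
    using continuous_Zc_valued_const[OF convex_connected[OF convex_Dl]] incr(2) that by blast
  with incr(1) show ?thesis using that by metis
qed

lemma closure_ball_product_eq_Dl:
  assumes "0 < R"
  shows "closure (UNIV \<times> ball 0 R \<times> ball 0 R) = Dl R"
  using assms by (simp add: Dl_eq closure_Times)

lemma derivative_periodic:
  fixes F :: "('c::finite,'u::finite,'s::finite) pt \<Rightarrow> ('c,'u,'s) pt"
    and DF :: "('c,'u,'s) pt \<Rightarrow> (('c,'u,'s) pt \<Rightarrow>\<^sub>L ('c,'u,'s) pt)"
  assumes R: "0 < R" and U: "open U" "Dl R \<subseteq> U"
    and der: "\<forall>z\<in>U. (F has_derivative blinfun_apply (DF z)) (at z)"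
    and cont: "continuous_on U DF"
    and eqv: "\<forall>z\<in>Dl R. \<forall>j\<in>Zc. \<exists>j'\<in>Zc. F (pl z + j, px z, py z) = F z + (j', 0, 0)"
    and j: "j \<in> Zc" and z: "z \<in> Dl R"
  shows "DF (z + (j, 0, 0)) = DF z"
proof -
  define s :: "('c,'u,'s) pt" where "s = (j, 0, 0)"
  have shift_Dl: "w + s \<in> Dl R" if "w \<in> Dl R" for w
    using that by (simp add: Dl_def s_def px_def py_def)
  have "continuous_on U F"
    using der by (meson continuous_at_imp_continuous_on has_derivative_continuous)
  then obtain c where c: "\<And>w. w \<in> Dl R \<Longrightarrow> F (w + s) = F w + (c, 0, 0)"
    using lift_increment_const[OF _ _ eqv j] R continuous_on_subset U(2) unfolding s_def
    by (metis less_imp_le)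
  define S0 :: "('c,'u,'s) pt set" where "S0 = UNIV \<times> ball 0 R \<times> ball 0 R"
  have S0: "open S0" "S0 \<subseteq> Dl R" "closure S0 = Dl R"
    unfolding S0_def using closure_ball_product_eq_Dl[OF R]
    by (auto simp: Dl_eq intro!: open_Times)
  have "DF (w + s) = DF w" if w: "w \<in> S0" for w
  proof -
    have "((\<lambda>w. F (w + s)) has_derivative DF (w + s)) (at w)"
    proof -
      have "((F \<circ> (\<lambda>w. w + s)) has_derivative (DF (w + s) \<circ> id)) (at w)"
      proof (rule diff_chain_at)
        show "((\<lambda>w. w + s) has_derivative id) (at w)"
          by (auto intro!: derivative_eq_intros simp: id_def)
        have "w + s \<in> U" using shift_Dl w S0(2) U(2) by blast
        then show "(F has_derivative DF (w + s)) (at (w + s))" using der by blast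
      qed
      then show ?thesis by (simp add: o_def)
    qed
    moreover have "((\<lambda>w. F (w + s)) has_derivative DF w) (at w)"
    proof (rule has_derivative_transform_within_open[OF _ S0(1) w])
      show "((\<lambda>w. F w + (c, 0, 0)) has_derivative DF w) (at w)"
        using der w S0(2) U(2) by (auto intro!: has_derivative_add_const)
    qed (use c S0(2) in auto)
    ultimately show ?thesis
      by (metis blinfun_eqI has_derivative_unique)
  qed
  moreover have "continuous_on (closure S0) (\<lambda>w. DF (w + s) - DF w)"
    unfolding S0(3) using shift_Dl U(2)
    by (intro continuous_intros continuous_on_compose2[OF cont] continuous_on_subset[OF cont]) auto
  ultimately have "DF (z + s) - DF z = 0"
    using continuous_constant_on_closure[of S0 "\<lambda>w. DF (w + s) - DF w"] z S0(3) by auto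
  then show ?thesis by (simp add: s_def)
qed

lemma bounded_derivative_Dl:
  fixes F :: "('c::finite,'u::finite,'s::finite) pt \<Rightarrow> ('c,'u,'s) pt"
    and DF :: "('c,'u,'s) pt \<Rightarrow> (('c,'u,'s) pt \<Rightarrow>\<^sub>L ('c,'u,'s) pt)"
  assumes R: "0 < R" and U: "open U" "Dl R \<subseteq> U"
    and der: "\<forall>z\<in>U. (F has_derivative blinfun_apply (DF z)) (at z)"
    and cont: "continuous_on U DF"
    and eqv: "\<forall>z\<in>Dl R. \<forall>j\<in>Zc. \<exists>j'\<in>Zc. F (pl z + j, px z, py z) = F z + (j', 0, 0)"
  shows "bounded (DF ` Dl R)"
proof -
  define K :: "('c,'u,'s) pt set" where "K = cbox 0 1 \<times> cball 0 R \<times> cball 0 R"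
  have "DF ` Dl R \<subseteq> DF ` K"
  proof
    fix A assume "A \<in> DF ` Dl R"
    then obtain z where z: "z \<in> Dl R" and A: "A = DF z" by blast
    define j :: "real^'c" where "j = (\<chi> i. - of_int \<lfloor>pl z $ i\<rfloor>)"
    have j: "j \<in> Zc" by (simp add: j_def Zc_def)
    have "(pl z + j) $ i = frac (pl z $ i)" for i by (simp add: j_def frac_def)
    then have "z + (j, 0, 0) \<in> K"
      using z frac_ge_0 frac_lt_1 less_imp_le
      by (cases z) (auto simp: K_def Dl_eq mem_box_cart pl_def)
    with derivative_periodic[OF R U der cont eqv j z] A show "A \<in> DF ` K"
      by (metis image_eqI)
  qed
  moreover have "compact (DF ` K)"
  proof (rule compact_continuous_image)
    have "K \<subseteq> Dl R" unfolding K_def Dl_eq by auto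
    then show "continuous_on K DF"
      using continuous_on_subset[OF cont] U(2) by blast
  qed (auto simp: K_def intro!: compact_Times)
  ultimately show ?thesis using bounded_subset compact_imp_bounded by blast
qed

lemma bounded_linear_ply: "bounded_linear (ply :: ('c::finite,'u::finite,'s::finite) pt \<Rightarrow> _)"
  unfolding ply_def pl_def py_def
  by (intro bounded_linear_Pair bounded_linear_fst bounded_linear_compose[OF bounded_linear_snd bounded_linear_snd])

lemma norm_ply_le: "norm (ply z) \<le> norm z"
  by (cases z) (simp add: ply_def pl_def py_def norm_Pair)

lemma blk_ly_ly_eq: "blk_ly_ly A = ply \<circ> A \<circ> (\<lambda>w. (fst w, 0, snd w))"
  by (simp add: blk_ly_ly_def fun_eq_iff)

lemma blk_x_ly_eq: "blk_x_ly A = ply \<circ> A \<circ> (\<lambda>v. (0, v, 0))"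
  by (simp add: blk_x_ly_def fun_eq_iff)

lemma
  fixes A :: "('c::finite,'u::finite,'s::finite) pt \<Rightarrow> ('c,'u,'s) pt"
  assumes A: "bounded_linear A"
  shows bounded_linear_blk_ly_ly: "bounded_linear (blk_ly_ly A)"
    and bounded_linear_blk_x_ly: "bounded_linear (blk_x_ly A)"
  unfolding blk_ly_ly_eq blk_x_ly_eq o_def
  by (intro bounded_linear_compose[OF bounded_linear_ply] bounded_linear_compose[OF A]
      bounded_linear_Pair bounded_linear_fst bounded_linear_snd bounded_linear_zero bounded_linear_ident)+

lemma
  fixes A :: "('c::finite,'u::finite,'s::finite) pt \<Rightarrow> ('c,'u,'s) pt"
  assumes A: "bounded_linear A"
  shows onorm_blk_ly_ly_le: "onorm (blk_ly_ly A) \<le> onorm A"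
    and onorm_blk_x_ly_le: "onorm (blk_x_ly A) \<le> onorm A"
proof -
  have ply_A: "norm (ply (A v)) \<le> onorm A * norm v" for v
    using norm_ply_le onorm[OF A] order_trans by blast
  show "onorm (blk_ly_ly A) \<le> onorm A"
  proof (rule onorm_le)
    fix w :: "(real^'c) \<times> (real^'s)"
    have "norm (fst w, 0::real^'u, snd w) = norm w" by (cases w) (simp add: norm_Pair)
    then show "norm (blk_ly_ly A w) \<le> onorm A * norm w"
      using ply_A[of "(fst w, 0, snd w)"] by (simp add: blk_ly_ly_def)
  qed
  show "onorm (blk_x_ly A) \<le> onorm A"
  proof (rule onorm_le)
    fix v :: "real^'u"
    have "norm (0::real^'c, v, 0::real^'s) = norm v" by (simp add: norm_Pair)
    then show "norm (blk_x_ly A v) \<le> onorm A * norm v"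
      using ply_A[of "(0, v, 0)"] by (simp add: blk_x_ly_def)
  qed
qed

lemma norm_ply_apply_le_cone:
  fixes A :: "('c::finite,'u::finite,'s::finite) pt \<Rightarrow> ('c,'u,'s) pt"
  assumes A: "bounded_linear A" and "0 \<le> L" and cone: "norm (px d) \<le> L * norm (ply d)"
  shows "norm (ply (A d)) \<le> (onorm (blk_ly_ly A) + L * onorm (blk_x_ly A)) * norm (ply d)"
proof -
  have "d = (fst (ply d), 0, snd (ply d)) + (0, px d, 0)"
    by (cases d) (simp add: ply_def pl_def px_def py_def)
  then have "A d = A ((fst (ply d), 0, snd (ply d)) + (0, px d, 0))"
    by (rule arg_cong)
  also have "\<dots> = A (fst (ply d), 0, snd (ply d)) + A (0, px d, 0)"
    by (rule linear_add[OF bounded_linear.linear[OF A]])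
  finally have "ply (A d) = blk_ly_ly A (ply d) + blk_x_ly A (px d)"
    by (simp add: blk_ly_ly_def blk_x_ly_def ply_def pl_def py_def)
  then have "norm (ply (A d)) \<le> norm (blk_ly_ly A (ply d)) + norm (blk_x_ly A (px d))"
    by (simp add: norm_triangle_ineq)
  also have "\<dots> \<le> onorm (blk_ly_ly A) * norm (ply d) + onorm (blk_x_ly A) * norm (px d)"
    by (intro add_mono onorm bounded_linear_blk_ly_ly[OF A] bounded_linear_blk_x_ly[OF A])
  also have "\<dots> \<le> onorm (blk_ly_ly A) * norm (ply d) + onorm (blk_x_ly A) * (L * norm (ply d))"
    using cone onorm_pos_le[OF bounded_linear_blk_x_ly[OF A]] by (simp add: mult_left_mono)
  finally show ?thesis by (simp add: algebra_simps)
qed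

lemma J_cs_imp_cone:
  assumes "z1 \<in> J_cs z2 L" "0 \<le> L"
  shows "norm (px z1 - px z2) \<le> L * norm (ply z1 - ply z2)"
  using assms by (auto simp: J_cs_def)

lemma mvt_directional_bound:
  fixes f :: "'a::real_normed_vector \<Rightarrow> 'b::real_inner"
  assumes "convex S" "x \<in> S" "y \<in> S"
    and der: "\<And>z. z \<in> S \<Longrightarrow> (f has_derivative f' z) (at z)"
    and bound: "\<And>z. z \<in> S \<Longrightarrow> norm (f' z (x - y)) \<le> B"
  shows "norm (f x - f y) \<le> B"
proof -
  define p where "p t = y + t *\<^sub>R (x - y)" for t :: real
  have p_in: "p t \<in> S" if "t \<in> {0..1}" for t
    using convexD_alt[OF assms(1,3,2), of t] that by (simp add: p_def algebra_simps)
  have der_fp: "((f \<circ> p) has_derivative (\<lambda>h. f' (p t) (h *\<^sub>R (x - y)))) (at t)"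
    if "t \<in> {0..1}" for t
  proof -
    have "(p has_derivative (\<lambda>h. h *\<^sub>R (x - y))) (at t)"
      unfolding p_def by (auto intro!: derivative_eq_intros)
    from diff_chain_at[OF this der[OF p_in[OF that]]] show ?thesis by (simp add: o_def)
  qed
  have "continuous_on {0..1} (f \<circ> p)"
    using der_fp has_derivative_continuous by (blast intro: continuous_at_imp_continuous_on)
  from mvt_general[OF zero_less_one this der_fp] obtain t where t: "t \<in> {0<..<1}"
    and "norm ((f \<circ> p) 1 - (f \<circ> p) 0) \<le> norm (f' (p t) ((1 - 0) *\<^sub>R (x - y)))"
    by auto
  then have "norm (f x - f y) \<le> norm (f' (p t) (x - y))" by (simp add: p_def)
  also have "\<dots> \<le> B" using t by (intro bound p_in) auto
  finally show ?thesis .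
qed

text \<open>Boundedness is needed because SUP of a set that is not bounded above is unspecified.\<close>

lemma cone_rate_le_mu_cs1:
  fixes DF :: "('c::finite,'u::finite,'s::finite) pt \<Rightarrow> (('c,'u,'s) pt \<Rightarrow>\<^sub>L ('c,'u,'s) pt)"
  assumes bdd: "bounded (DF ` Dl R)" and "0 \<le> L" and z: "z \<in> Dl R"
  shows "onorm (blk_ly_ly (DF z)) + L * onorm (blk_x_ly (DF z)) \<le> mu_cs1 R L (\<lambda>z. blinfun_apply (DF z))"
  unfolding mu_cs1_def
proof (rule cSUP_upper[OF z])
  obtain M where M: "\<And>w. w \<in> Dl R \<Longrightarrow> norm (DF w) \<le> M"
    using bdd by (auto simp: bounded_iff)
  have "onorm (blk_ly_ly (DF w)) + L * onorm (blk_x_ly (DF w)) \<le> M + L * M" if "w \<in> Dl R" for w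
  proof -
    have "onorm (DF w) \<le> M" using M[OF that] by (simp add: norm_blinfun.rep_eq)
    then have "onorm (blk_ly_ly (DF w)) \<le> M" "onorm (blk_x_ly (DF w)) \<le> M"
      by (rule order_trans[OF onorm_blk_ly_ly_le[OF blinfun.bounded_linear_right]],
          rule order_trans[OF onorm_blk_x_ly_le[OF blinfun.bounded_linear_right]])
    with \<open>0 \<le> L\<close> show ?thesis by (intro add_mono mult_left_mono)
  qed
  then show "bdd_above ((\<lambda>w. onorm (blk_ly_ly (DF w)) + L * onorm (blk_x_ly (DF w))) ` Dl R)"
    by (intro bdd_aboveI2) blast
qed

theorem lemma4p8:
  fixes F :: "('c::finite,'u::finite,'s::finite) pt \<Rightarrow> ('c,'u,'s) pt"
    and DF :: "('c,'u,'s) pt \<Rightarrow> (('c,'u,'s) pt \<Rightarrow>\<^sub>L ('c,'u,'s) pt)"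
    and U :: "('c,'u,'s) pt set"
    and R L :: real and z1 z2 :: "('c,'u,'s) pt" and k :: "real^'c"
  assumes "0 < R" "R < R_Lam / 2"
    and "2 * R / R_Lam < L" "L < 1"
    and "open U" "Dl R \<subseteq> U"
    and "\<forall>z\<in>U. (F has_derivative blinfun_apply (DF z)) (at z)"
    and "continuous_on U DF"
    and "\<forall>z\<in>Dl R. \<forall>j\<in>Zc. \<exists>j'\<in>Zc. F (pl z + j, px z, py z) = F z + (j', 0, 0)"
    and "rate_conditions_0 R L (\<lambda>z. blinfun_apply (DF z))"
    and "z1 \<in> Dl R" "z2 \<in> Dl R" "norm (pl z1 - pl z2) \<le> R_Lam"
    and "k \<in> Zc" "norm (pl (F z1) - pl (F z2) - k) \<le> R_Lam"
    and "z1 \<in> J_cs z2 L"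
  shows "norm (ply (F z1) - ply (F z2) - (k, 0))
           \<le> mu_cs1 R L (\<lambda>z. blinfun_apply (DF z)) * norm (ply z1 - ply z2)"
proof -
  let ?mu = "mu_cs1 R L (\<lambda>z. blinfun_apply (DF z))"
  have L: "0 \<le> L" using assms(1,3) by (simp add: R_Lam_def)
  have bdd: "bounded (DF ` Dl R)"
    using bounded_derivative_Dl[OF assms(1,5-9)] .
  have cone: "norm (px (z1 - z2)) \<le> L * norm (ply (z1 - z2))"
    using J_cs_imp_cone[OF assms(16) L] by (simp add: px_def ply_def pl_def py_def)
  have "norm (ply (F z1) - ply (F z2)) \<le> ?mu * norm (ply z1 - ply z2)"
  proof (rule mvt_directional_bound[OF convex_Dl assms(11,12)])
    fix z :: "('c,'u,'s) pt" assume z: "z \<in> Dl R"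
    show "((\<lambda>z. ply (F z)) has_derivative (\<lambda>v. ply (DF z v))) (at z)"
      using assms(6,7) z bounded_linear.has_derivative[OF bounded_linear_ply] by blast
    have "norm (ply (DF z (z1 - z2)))
        \<le> (onorm (blk_ly_ly (DF z)) + L * onorm (blk_x_ly (DF z))) * norm (ply (z1 - z2))"
      by (rule norm_ply_apply_le_cone[OF blinfun.bounded_linear_right L cone])
    also have "\<dots> \<le> ?mu * norm (ply z1 - ply z2)"
      using cone_rate_le_mu_cs1[OF bdd L z] by (simp add: mult_right_mono ply_def pl_def py_def)
    finally show "norm (ply (DF z (z1 - z2))) \<le> ?mu * norm (ply z1 - ply z2)" .
  qed
  moreover have "norm (ply (F z1) - ply (F z2) - (k, 0)) \<le> norm (ply (F z1) - ply (F z2))"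
    using norm_Pair_diff_Zc_le[OF assms(14), of "ply (F z1) - ply (F z2)"] assms(15)
    by (simp add: ply_def R_Lam_def)
  ultimately show ?thesis by linarith
qed

end
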